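(* Let $K$ be a field, $A=\{\alpha_1,\dots,\alpha_m\}\subset K$ and $B=\{\beta_1,\dots,\beta_n\}\subset K$ finite sets with $|A|=m$, $|B|=n$, $f=\prod_{i=1}^m(x-\alpha_i)$, $g=\prod_{j=1}^n(x-\beta_j)$. Let $0\le d\le n-1$ with $d\le m$. Then $$\operatorname{Syl}_{0,d}(A,B)=\operatorname{Sres}_d(f,g).$$
   Context: For finite sets $Y,Z$, $\mathcal{R}(Y,Z):=\prod_{y\in Y,z\in Z}(y-z)$ (equal to $1$ if $Y$ or $Z$ is empty), and $\mathcal{R}(x,Z):=\mathcal{R}(\{x\},Z)$. For $0\le p\le m$, $0\le q\le n$, $$\operatorname{Syl}_{p,q}(A,B)(x):=\sum_{\substack{A'\subset A,\ B'\subset B\\ |A'|=p,\ |B'|=q}}\mathcal{R}(A',B')\,\mathcal{R}(A\setminus A',B\setminus B')\,\frac{\mathcal{R}(x,A')\,\mathcal{R}(x,B')}{\mathcal{R}(A',A\setminus A')\,\mathcal{R}(B',B\setminus B')}.$$ Write $f=\sum_{i=0}^m f_ix^i$, $g=\sum_{i=0}^ng_ix^i$ with $f_i=g_i=0$ outside the natural ranges. For $d\le\min\{m,n\}$ if $m\ne n$, or $d<m=n$, the $d$-th subresultant $\operatorname{Sres}_d(f,g)(x)$ is the determinant of the $(m+n-2d)\times(m+n-2d)$ matrix with rows $x^jf(x)$ for $j=n-d-1,\dots,0$ followed by rows $x^jg(x)$ for $j=m-d-1,\dots,0$, where the row corresponding to a polynomial $h=x^jf$ or $x^jg$ has as its first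 $m+n-2d-1$ entries the coefficients of $x^{m+n-d-1},x^{m+n-d-2},\dots,x^{d+1}$ in $h$, and as last entry the polynomial $h(x)$ itself. *)

theory Defs
  imports "HOL-Computational_Algebra.Polynomial" "Jordan_Normal_Form.Determinant"
begin

definition Res :: "'a::comm_ring_1 set \<Rightarrow> 'a set \<Rightarrow> 'a" where
  "Res Y Z = (\<Prod>y\<in>Y. \<Prod>z\<in>Z. (y - z))"

definition Res_x :: "'a::comm_ring_1 set \<Rightarrow> 'a poly" where
  "Res_x Z = (\<Prod>z\<in>Z. [:- z, 1:])"

definition Syl :: "nat \<Rightarrow> nat \<Rightarrow> 'a::field set \<Rightarrow> 'a set \<Rightarrow> 'a poly" where
  "Syl p q A B =
     (\<Sum>A'\<in>{A'. A' \<subseteq> A \<and> card A' = p}. \<Sum>B'\<in>{B'. B' \<subseteq> B \<and> card B' = q}.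
        smult (Res A' B' * Res (A - A') (B - B') / (Res A' (A - A') * Res B' (B - B')))
              (Res_x A' * Res_x B'))"

definition sres_row :: "'a::comm_ring_1 poly \<Rightarrow> 'a poly \<Rightarrow> nat \<Rightarrow> nat \<Rightarrow> 'a poly" where
  "sres_row f g d i =
     (let m = degree f; n = degree g in
      if i < n - d then monom 1 (n - d - 1 - i) * f
      else monom 1 (m - d - 1 - (i - (n - d))) * g)"

text \<open>The d-th subresultant: determinant of the (m+n-2d) square matrix whose row for h has
  entries the coefficients of x^(m+n-d-1), ..., x^(d+1) in h, and last entry h itself.\<close>
definition Sres :: "'a::comm_ring_1 poly \<Rightarrow> 'a poly \<Rightarrow> nat \<Rightarrow> 'a poly" where
  "Sres f g d =
     (let m = degree f; n = degree g; N = m + n - 2 * d in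
      det (mat N N (\<lambda>(i, j).
        (let h = sres_row f g d i in
         if j = N - 1 then h else [: coeff h (m + n - d - 1 - j) :]))))"

end

theory Submission
  imports Defs
begin

text \<open>Let \<open>m = |A|\<close>, \<open>n = |B|\<close>, \<open>e = n - d\<close>, \<open>f = R(x,A)\<close> and \<open>g = R(x,B)\<close>.
  Subtracting multiples of the rows \<open>x^j g\<close> from the rows \<open>x^j f\<close> of the subresultant matrix
  replaces the latter by \<open>x^j f mod g\<close>, after which the rows \<open>x^j g\<close> split off as a
  unitriangular block: \<open>Sres_d(f,g)\<close> is \<open>(-1)^(e(m-d))\<close> times the determinant of the \<open>e\<close> rows
  \<open>x^(e-1-i) f mod g\<close>. These have degree \<open>< n\<close> and take the values \<open>b^(e-1-i) f(b)\<close> on \<open>B\<close>,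
  so expanding them in the Lagrange basis of \<open>B\<close> factors the coefficient matrix, and
  Cauchy-Binet turns the determinant into a sum over the \<open>e\<close>-subsets \<open>S\<close> of \<open>B\<close>. The term
  of \<open>S\<close> is a Vandermonde determinant on \<open>S\<close> times a minor of the Lagrange rows; running the
  same computation on the rows \<open>x^(e-1-i) R(x, B - S)\<close>, whose determinant is \<open>R(x, B - S)\<close>
  itself, evaluates it as \<open>R(S,A) / R(S, B - S) * R(x, B - S)\<close>. Passing to the complements
  \<open>B' = B - S\<close> and swapping the arguments of \<open>R\<close> gives the Sylvester sum with the same
  sign.\<close>

section \<open>Determinants\<close>

definition subset_enum :: "nat set \<Rightarrow> nat \<Rightarrow> nat" where
  "subset_enum I = (!) (sorted_list_of_set I)"

lemma bij_betw_subset_enum: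
  assumes "finite I"
  shows "bij_betw (subset_enum I) {0..<card I} I"
  unfolding subset_enum_def using assms
  by (intro bij_betw_nth) (auto simp: atLeast0LessThan)

abbreviation inj_maps :: "nat \<Rightarrow> nat \<Rightarrow> (nat \<Rightarrow> nat) set" where
  "inj_maps e n \<equiv>
     {f. (\<forall>i\<in>{0..<e}. f i \<in> {0..<n}) \<and> (\<forall>i. i \<notin> {0..<e} \<longrightarrow> f i = i) \<and> inj_on f {0..<e}}"

definition enum_perm :: "nat \<Rightarrow> nat set \<Rightarrow> (nat \<Rightarrow> nat) \<Rightarrow> nat \<Rightarrow> nat" where
  "enum_perm e I p i = (if i < e then subset_enum I (p i) else i)"

lemma enum_perm_image:
  assumes "finite I" "card I = e" "p permutes {0..<e}"
  shows "enum_perm e I p ` {0..<e} = I"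
proof -
  have "enum_perm e I p ` {0..<e} = subset_enum I ` (p ` {0..<e})"
    by (force simp: enum_perm_def)
  also have "\<dots> = I"
    using assms bij_betw_subset_enum[OF assms(1)] by (simp add: permutes_image bij_betw_def)
  finally show ?thesis .
qed

lemma enum_perm_eqD:
  assumes I: "finite I" "card I = e" and p: "p permutes {0..<e}"
    and J: "finite J" "card J = e" and q: "q permutes {0..<e}"
    and eq: "enum_perm e I p = enum_perm e J q"
  shows "I = J \<and> p = q"
proof
  show IJ: "I = J"
    using enum_perm_image[OF I p] enum_perm_image[OF J q] eq by metis
  have "inj_on (subset_enum I) {0..<e}"
    using bij_betw_subset_enum[OF I(1)] I(2) by (simp add: bij_betw_def)
  moreover have "p i < e" "q i < e" if "i < e" for i
    using permutes_in_image[OF p] permutes_in_image[OF q] that by auto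
  ultimately have "p i = q i" if "i < e" for i
    using fun_cong[OF eq, of i] that IJ by (auto simp: enum_perm_def inj_on_def)
  thus "p = q"
    using permutes_not_in[OF p] permutes_not_in[OF q] by (metis atLeastLessThan_iff ext zero_le)
qed

lemma enum_perm_surj:
  assumes "f \<in> inj_maps e n"
  obtains I p where "I \<subseteq> {0..<n}" "card I = e" "p permutes {0..<e}" "f = enum_perm e I p"
proof -
  have f: "\<forall>i\<in>{0..<e}. f i \<in> {0..<n}" "\<forall>i. i \<notin> {0..<e} \<longrightarrow> f i = i" "inj_on f {0..<e}"
    using assms by auto
  define I where "I = f ` {0..<e}"
  have fin: "finite I" and card: "card I = e"
    using f(3) by (auto simp: I_def card_image)
  have bij: "bij_betw (subset_enum I) {0..<e} I"
    using bij_betw_subset_enum[OF fin] card by simp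
  define p where "p i = (if i < e then inv_into {0..<e} (subset_enum I) (f i) else i)" for i
  have p: "p i < e \<and> subset_enum I (p i) = f i" if "i < e" for i
    using that bij_betw_apply[OF bij_betw_inv_into[OF bij]] bij_betw_inv_into_right[OF bij]
    by (auto simp: p_def I_def)
  have "p permutes {0..<e}"
  proof (rule inj_on_nat_permutes)
    show "inj_on p {0..<e}"
      using f(3) p by (metis atLeastLessThan_iff inj_on_def)
  qed (use p in \<open>auto simp: p_def\<close>)
  moreover have "f = enum_perm e I p"
    using p f(2) by (auto simp: enum_perm_def)
  moreover have "I \<subseteq> {0..<n}" using f(1) by (auto simp: I_def)
  ultimately show ?thesis using that card by blast
qed

lemma enum_perm_in_inj_maps:
  assumes I: "I \<subseteq> {0..<n}" "card I = e" and p: "p permutes {0..<e}"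
  shows "enum_perm e I p \<in> inj_maps e n"
proof -
  have bij: "bij_betw (subset_enum I) {0..<e} I"
    using bij_betw_subset_enum[of I] I finite_subset by auto
  have "inj_on (enum_perm e I p) {0..<e}"
  proof (rule inj_onI)
    fix x y assume "x \<in> {0..<e}" "y \<in> {0..<e}" "enum_perm e I p x = enum_perm e I p y"
    then have "p x = p y"
      using bij_betw_imp_inj_on[OF bij] permutes_in_image[OF p]
      by (auto simp: enum_perm_def inj_on_def)
    then show "x = y" using permutes_inj[OF p] by (simp add: inj_eq)
  qed
  then show ?thesis
    using bij_betw_apply[OF bij] permutes_in_image[OF p] I
    by (fastforce simp: enum_perm_def subset_iff)
qed

lemma inj_on_enum_perm:
  "inj_on (\<lambda>(I, p). enum_perm e I p)
     (Sigma {I. I \<subseteq> {0..<n} \<and> card I = e} (\<lambda>_. {p. p permutes {0..<e}}))"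
proof (rule inj_onI)
  fix x y
  assume "x \<in> Sigma {I. I \<subseteq> {0..<n} \<and> card I = e} (\<lambda>_. {p. p permutes {0..<e}})"
    and "y \<in> Sigma {I. I \<subseteq> {0..<n} \<and> card I = e} (\<lambda>_. {p. p permutes {0..<e}})"
    and "(\<lambda>(I, p). enum_perm e I p) x = (\<lambda>(I, p). enum_perm e I p) y"
  moreover obtain I p J q where "x = (I, p)" "y = (J, q)" by force
  ultimately show "x = y"
    using enum_perm_eqD[of I e p J q] by (auto intro: finite_subset)
qed

lemma bij_betw_enum_perm:
  "bij_betw (\<lambda>(I, p). enum_perm e I p)
     (Sigma {I. I \<subseteq> {0..<n} \<and> card I = e} (\<lambda>_. {p. p permutes {0..<e}})) (inj_maps e n)"
proof (rule bij_betw_imageI[OF inj_on_enum_perm], intro equalityI subsetI)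
  fix f assume "f \<in> inj_maps e n"
  then obtain I p where "I \<subseteq> {0..<n}" "card I = e" "p permutes {0..<e}" "f = enum_perm e I p"
    by (rule enum_perm_surj)
  then show "f \<in> (\<lambda>(I, p). enum_perm e I p) `
      Sigma {I. I \<subseteq> {0..<n} \<and> card I = e} (\<lambda>_. {p. p permutes {0..<e}})"
    by force
next
  fix f assume "f \<in> (\<lambda>(I, p). enum_perm e I p) `
      Sigma {I. I \<subseteq> {0..<n} \<and> card I = e} (\<lambda>_. {p. p permutes {0..<e}})"
  then obtain I p where "I \<subseteq> {0..<n}" "card I = e" "p permutes {0..<e}" "f = enum_perm e I p"
    by auto
  then show "f \<in> inj_maps e n"
    using enum_perm_in_inj_maps[of I n e p] by simp
qed

lemma det_mult_eq_sum_inj_maps: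
  fixes A B :: "'a::comm_ring_1 mat"
  assumes A: "A \<in> carrier_mat e n" and B: "B \<in> carrier_mat n e"
  shows "det (A * B) =
    (\<Sum>f\<in>inj_maps e n. (\<Prod>i\<in>{0..<e}. A $$ (i, f i)) * det (mat\<^sub>r e e (\<lambda>i. row B (f i))))"
    (is "_ = sum ?g ?Fi")
proof -
  let ?F = "{f. (\<forall>i\<in>{0..<e}. f i \<in> {0..<n}) \<and> (\<forall>i. i \<notin> {0..<e} \<longrightarrow> f i = i)}"
  have fin: "finite ?F" by (rule finite_bounded_functions) auto
  have "det (A * B) = (\<Sum>f\<in>?F. det (mat\<^sub>r e e (\<lambda>i. A $$ (i, f i) \<cdot>\<^sub>v row B (f i))))"
    unfolding mat_mul_finsum_alt[OF A B]
    by (rule det_linear_rows_sum) (use B in auto)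
  also have "\<dots> = sum ?g ?F"
    by (rule sum.cong[OF refl], rule det_rows_mul) (use B in auto)
  also have "\<dots> = sum ?g ?Fi"
  proof (rule sum.mono_neutral_right[OF fin], blast, rule ballI)
    fix f assume "f \<in> ?F - ?Fi"
    then obtain i j where "f i = f j" "i \<noteq> j" "i < e" "j < e"
      unfolding inj_on_def by auto
    then have "det (mat\<^sub>r e e (\<lambda>i. row B (f i))) = 0"
      by (intro det_identical_rows[of _ e i j]) (use B in auto)
    then show "?g f = 0" by simp
  qed
  finally show ?thesis .
qed

lemma sum_perms_enum_perm:
  fixes A B :: "'a::comm_ring_1 mat"
  assumes B: "B \<in> carrier_mat n e" and I: "I \<subseteq> {0..<n}" "card I = e"
  shows "(\<Sum>p\<in>{p. p permutes {0..<e}}. (\<Prod>i\<in>{0..<e}. A $$ (i, enum_perm e I p i)) *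
      det (mat\<^sub>r e e (\<lambda>i. row B (enum_perm e I p i))))
    = det (mat e e (\<lambda>(i, j). A $$ (i, subset_enum I j))) *
      det (mat e e (\<lambda>(i, j). B $$ (subset_enum I i, j)))"
proof -
  let ?CA = "mat e e (\<lambda>(i, j). A $$ (i, subset_enum I j))"
  let ?RB = "mat e e (\<lambda>(i, j). B $$ (subset_enum I i, j))"
  have enum: "subset_enum I j < n" if "j < e" for j
    using bij_betw_apply[OF bij_betw_subset_enum[of I]] I that finite_subset by fastforce
  have "(\<Prod>i\<in>{0..<e}. A $$ (i, enum_perm e I p i)) * det (mat\<^sub>r e e (\<lambda>i. row B (enum_perm e I p i)))
      = (signof p * (\<Prod>i\<in>{0..<e}. ?CA $$ (i, p i))) * det ?RB"
    if p: "p permutes {0..<e}" for p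
  proof -
    have pe: "p i < e" if "i < e" for i using permutes_in_image[OF p] that by auto
    have "mat\<^sub>r e e (\<lambda>i. row B (enum_perm e I p i)) = mat e e (\<lambda>(i, j). ?RB $$ (p i, j))"
      by (rule eq_matI) (use B pe enum in \<open>auto simp: enum_perm_def\<close>)
    then have "det (mat\<^sub>r e e (\<lambda>i. row B (enum_perm e I p i))) = signof p * det ?RB"
      using det_permute_rows[OF _ p, of ?RB] by auto
    moreover have "(\<Prod>i\<in>{0..<e}. A $$ (i, enum_perm e I p i)) = (\<Prod>i\<in>{0..<e}. ?CA $$ (i, p i))"
      by (rule prod.cong) (auto simp: pe enum_perm_def)
    ultimately show ?thesis by (simp add: ac_simps)
  qed
  then have "(\<Sum>p\<in>{p. p permutes {0..<e}}. (\<Prod>i\<in>{0..<e}. A $$ (i, enum_perm e I p i)) *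
      det (mat\<^sub>r e e (\<lambda>i. row B (enum_perm e I p i))))
    = (\<Sum>p\<in>{p. p permutes {0..<e}}. signof p * (\<Prod>i\<in>{0..<e}. ?CA $$ (i, p i))) * det ?RB"
    by (simp add: sum_distrib_right)
  also have "\<dots> = det ?CA * det ?RB"
    by (subst det_def'[of _ e]) auto
  finally show ?thesis .
qed

lemma cauchy_binet:
  fixes A B :: "'a::comm_ring_1 mat"
  assumes A: "A \<in> carrier_mat e n" and B: "B \<in> carrier_mat n e"
  shows "det (A * B) = (\<Sum>I\<in>{I. I \<subseteq> {0..<n} \<and> card I = e}.
     det (mat e e (\<lambda>(i, j). A $$ (i, subset_enum I j))) *
     det (mat e e (\<lambda>(i, j). B $$ (subset_enum I i, j))))"
proof -
  let ?g = "\<lambda>f. (\<Prod>i\<in>{0..<e}. A $$ (i, f i)) * det (mat\<^sub>r e e (\<lambda>i. row B (f i)))"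
  have "det (A * B) = sum ?g (inj_maps e n)"
    by (rule det_mult_eq_sum_inj_maps[OF A B])
  also have "\<dots> = (\<Sum>x\<in>Sigma {I. I \<subseteq> {0..<n} \<and> card I = e} (\<lambda>_. {p. p permutes {0..<e}}).
      ?g ((\<lambda>(I, p). enum_perm e I p) x))"
    by (rule sum.reindex_bij_betw[OF bij_betw_enum_perm, symmetric])
  also have "\<dots> = (\<Sum>I\<in>{I. I \<subseteq> {0..<n} \<and> card I = e}. \<Sum>p\<in>{p. p permutes {0..<e}}. ?g (enum_perm e I p))"
    by (subst sum.Sigma) (auto intro: finite_subset finite_permutations simp: case_prod_beta)
  also have "\<dots> = (\<Sum>I\<in>{I. I \<subseteq> {0..<n} \<and> card I = e}.
      det (mat e e (\<lambda>(i, j). A $$ (i, subset_enum I j))) *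
      det (mat e e (\<lambda>(i, j). B $$ (subset_enum I i, j))))"
    using sum_perms_enum_perm[OF B] by (intro sum.cong) auto
  finally show ?thesis .
qed

lemma det_upper_triangular_diag:
  assumes "upper_triangular A" "A \<in> carrier_mat n n"
  shows "det A = (\<Prod>i<n. A $$ (i, i))"
  using assms by (simp add: det_upper_triangular prod_list_diag_prod lessThan_atLeast0)

lemma det_mat_diag: "det (mat_diag n f) = (\<Prod>i<n. f i)"
  by (subst det_upper_triangular_diag[of _ n]) (auto simp: mat_diag_def upper_triangular_def)

section \<open>Polynomials\<close>

lemma poly_Res_x: "poly (Res_x Z) x = (\<Prod>z\<in>Z. x - z)"
  by (simp add: Res_x_def poly_prod)

lemma poly_Res_x_eq_0: "finite Z \<Longrightarrow> z \<in> Z \<Longrightarrow> poly (Res_x Z) z = 0"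
  unfolding poly_Res_x by (rule prod_zero) auto

lemma degree_Res_x: "finite Z \<Longrightarrow> degree (Res_x (Z :: 'a::idom set)) = card Z"
  by (simp add: Res_x_def degree_prod_eq_sum_degree)

lemma lead_coeff_Res_x: "lead_coeff (Res_x (Z :: 'a::idom set)) = 1"
  by (simp add: Res_x_def lead_coeff_prod)

lemma Res_x_nonzero: "Res_x (Z :: 'a::idom set) \<noteq> 0"
  using lead_coeff_Res_x[of Z] by auto

lemma Res_swap: "Res X Y = (-1) ^ (card X * card Y) * Res Y X"
proof -
  have "Res X Y = (\<Prod>y\<in>Y. \<Prod>x\<in>X. - (y - x))"
    unfolding Res_def by (subst prod.swap) simp
  also have "\<dots> = (\<Prod>y\<in>Y. (-1) ^ card X * (\<Prod>x\<in>X. y - x))"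
    by (simp only: prod_uminus)
  also have "\<dots> = (-1) ^ (card X * card Y) * Res Y X"
    by (simp add: Res_def prod.distrib power_mult)
  finally show ?thesis .
qed

lemma smult_sum_right: "smult c (\<Sum>x\<in>S. f x) = (\<Sum>x\<in>S. smult c (f x))"
  by (induct S rule: infinite_finite_induct) (simp_all add: smult_add_right)

lemma degree_monom_mult_le: "degree (monom c k * p) \<le> k + degree p"
  by (rule order.trans[OF degree_mult_le]) (simp add: degree_monom_le)

lemma poly_mod_eq_at_root:
  fixes p g :: "'a::field poly"
  assumes "poly g x = 0"
  shows "poly (p mod g) x = poly p x"
proof -
  have "poly p x = poly (p div g * g + p mod g) x" by simp
  with assms show ?thesis by (simp only: poly_add poly_mult mult_zero_right add_0_left)
qed

lemma coeff_div_eq_0: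
  fixes p g :: "'a::field poly"
  assumes g: "g \<noteq> 0" and deg: "degree p < degree g + k" and "k \<le> t"
  shows "coeff (p div g) t = 0"
proof (cases "p div g = 0")
  case False
  have "degree (p mod g) < degree (p div g * g) \<or> p mod g = 0"
    using degree_mod_less[OF g, of p] degree_mult_eq[OF False g] by auto
  then have "degree p = degree (p div g * g)"
    by (metis div_mult_mod_eq add.right_neutral degree_add_eq_left)
  then have "degree (p div g) < k"
    using degree_mult_eq[OF False g] deg by simp
  then show ?thesis using \<open>k \<le> t\<close> by (simp add: coeff_eq_0)
qed simp

lemma mod_plus_shifted_multiples:
  fixes p g :: "'a::field poly"
  assumes g: "g \<noteq> 0" and deg: "degree p < degree g + k"
  shows "p mod g + (\<Sum>t<k. smult (coeff (p div g) t) (monom 1 t * g)) = p"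
proof -
  have "(\<Sum>t<k. monom (coeff (p div g) t) t) = p div g"
    using coeff_div_eq_0[OF g deg]
    by (intro poly_eqI) (auto simp: coeff_sum coeff_monom)
  then have "(\<Sum>t<k. smult (coeff (p div g) t) (monom 1 t * g)) = p div g * g"
    by (simp add: smult_monom flip: mult_smult_left sum_distrib_right)
  then show ?thesis by simp
qed

section \<open>Lagrange interpolation\<close>

definition lagrange_basis :: "'a::field set \<Rightarrow> 'a \<Rightarrow> 'a poly" where
  "lagrange_basis B b = smult (inverse (\<Prod>c\<in>B - {b}. b - c)) (Res_x (B - {b}))"

lemma poly_lagrange_basis:
  assumes "finite B" "b \<in> B" "c \<in> B"
  shows "poly (lagrange_basis B b) c = (if c = b then 1 else 0)"
  using assms by (auto simp: lagrange_basis_def poly_Res_x prod_zero_iff)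

lemma degree_lagrange_basis:
  assumes "finite B" "b \<in> B"
  shows "degree (lagrange_basis B b) < card B"
  using assms card_Diff1_less[OF assms]
  by (simp add: lagrange_basis_def degree_Res_x)

lemma lagrange_interpolation:
  fixes p :: "'a::field poly"
  assumes B: "finite B" and S: "S \<subseteq> B" and s: "bij_betw s {..<e} S"
    and deg: "degree p < card B" and zero: "\<And>b. b \<in> B - S \<Longrightarrow> poly p b = 0"
  shows "p = (\<Sum>j<e. smult (poly p (s j)) (lagrange_basis B (s j)))"
proof -
  have "p = (\<Sum>b\<in>B. smult (poly p b) (lagrange_basis B b))"
  proof (rule poly_eqI_degree[of B])
    show "poly p c = poly (\<Sum>b\<in>B. smult (poly p b) (lagrange_basis B b)) c" if "c \<in> B" for c
      using that B by (simp add: poly_sum poly_lagrange_basis if_distrib cong: if_cong)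
    show "degree (\<Sum>b\<in>B. smult (poly p b) (lagrange_basis B b)) < card B"
      using deg degree_lagrange_basis[OF B]
      by (intro degree_sum_less) (auto intro: le_less_trans[OF degree_smult_le])
  qed (fact deg)
  also have "\<dots> = (\<Sum>b\<in>S. smult (poly p b) (lagrange_basis B b))"
    using zero by (intro sum.mono_neutral_right[OF B S]) auto
  also have "\<dots> = (\<Sum>j<e. smult (poly p (s j)) (lagrange_basis B (s j)))"
    by (rule sum.reindex_bij_betw[OF s, symmetric])
  finally show ?thesis .
qed

lemma mod_Res_x_eq_interpolation:
  fixes p :: "'a::field poly"
  assumes B: "finite B" "B \<noteq> {}" and bs: "bij_betw bs {0..<card B} B"
  shows "p mod Res_x B = (\<Sum>l<card B. smult (poly p (bs l)) (lagrange_basis B (bs l)))"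
proof -
  have "degree (p mod Res_x B) < card B"
    using degree_mod_less[OF Res_x_nonzero, of p B] B by (auto simp: degree_Res_x)
  then have "p mod Res_x B =
      (\<Sum>l<card B. smult (poly (p mod Res_x B) (bs l)) (lagrange_basis B (bs l)))"
    using bs by (intro lagrange_interpolation[OF B(1) subset_refl]) (auto simp: atLeast0LessThan)
  then show ?thesis
    using bij_betw_apply[OF bs] B(1) by (simp add: poly_mod_eq_at_root poly_Res_x_eq_0)
qed

section \<open>Matrices of coefficient rows\<close>

definition coeff_row :: "nat \<Rightarrow> nat \<Rightarrow> 'a::zero poly \<Rightarrow> nat \<Rightarrow> 'a poly" where
  "coeff_row N k h j = (if j = N - 1 then h else [:coeff h (k - 1 - j):])"

definition coeff_row_mat :: "nat \<Rightarrow> nat \<Rightarrow> nat \<Rightarrow> (nat \<Rightarrow> 'a::zero poly) \<Rightarrow> 'a poly mat" where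
  "coeff_row_mat R N k hs = mat R N (\<lambda>(i, j). coeff_row N k (hs i) j)"

lemma coeff_row_mat_carrier [simp]: "coeff_row_mat R N k hs \<in> carrier_mat R N"
  and dim_row_coeff_row_mat [simp]: "dim_row (coeff_row_mat R N k hs) = R"
  and dim_col_coeff_row_mat [simp]: "dim_col (coeff_row_mat R N k hs) = N"
  by (simp_all add: coeff_row_mat_def)

lemma index_coeff_row_mat [simp]:
  "i < R \<Longrightarrow> j < N \<Longrightarrow> coeff_row_mat R N k hs $$ (i, j) = coeff_row N k (hs i) j"
  by (simp add: coeff_row_mat_def)

lemma coeff_row_mat_lincomb:
  fixes c :: "nat \<Rightarrow> nat \<Rightarrow> 'a::comm_ring_1"
  assumes "\<And>i. i < R \<Longrightarrow> hs i = (\<Sum>l<L. smult (c i l) (gs l))"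
  shows "coeff_row_mat R N k hs = mat R L (\<lambda>(i, l). [:c i l:]) * coeff_row_mat L N k gs"
proof (rule eq_matI)
  fix i j assume "i < dim_row (mat R L (\<lambda>(i, l). [:c i l:]) * coeff_row_mat L N k gs)"
    and "j < dim_col (mat R L (\<lambda>(i, l). [:c i l:]) * coeff_row_mat L N k gs)"
  then have i: "i < R" and j: "j < N" by auto
  have "coeff_row N k (hs i) j = (\<Sum>l<L. [:c i l:] * coeff_row N k (gs l) j)"
    unfolding assms[OF i] coeff_row_def by (auto simp: coeff_sum sum_to_poly)
  then show "coeff_row_mat R N k hs $$ (i, j) =
      (mat R L (\<lambda>(i, l). [:c i l:]) * coeff_row_mat L N k gs) $$ (i, j)"
    using i j by (auto simp: scalar_prod_def lessThan_atLeast0 intro!: sum.cong)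
qed auto

lemma det_coeff_row_mat_shifts:
  fixes Q :: "'a::comm_ring_1 poly"
  assumes monic: "lead_coeff Q = 1" and deg: "degree Q = n - e" and "e \<le> n" "0 < e"
  shows "det (coeff_row_mat e e n (\<lambda>i. monom 1 (e - 1 - i) * Q)) = Q"
proof -
  let ?M = "coeff_row_mat e e n (\<lambda>i. monom 1 (e - 1 - i) * Q)"
  have "upper_triangular ?M"
    using deg \<open>e \<le> n\<close> by (auto simp: upper_triangular_def coeff_row_def coeff_monom_mult coeff_eq_0)
  then have "det ?M = (\<Prod>i<e. ?M $$ (i, i))"
    by (rule det_upper_triangular_diag) simp
  also have "\<dots> = (\<Prod>i<e. if i = e - 1 then Q else 1)"
    using monic deg \<open>e \<le> n\<close>
    by (intro prod.cong) (auto simp: coeff_row_def coeff_monom_mult)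
  also have "\<dots> = Q"
    using \<open>0 < e\<close> by (simp add: prod.delta)
  finally show ?thesis .
qed

lemma Sres_eq_det_coeff_row_mat:
  "Sres f g d = det (coeff_row_mat (degree f + degree g - 2 * d) (degree f + degree g - 2 * d)
     (degree f + degree g - d) (sres_row f g d))"
  unfolding Sres_def coeff_row_mat_def coeff_row_def Let_def
  by (rule arg_cong[of _ _ det], rule eq_matI) auto

section \<open>Reducing the subresultant matrix modulo the second polynomial\<close>

definition reduced_sres_row :: "'a::field poly \<Rightarrow> 'a poly \<Rightarrow> nat \<Rightarrow> nat \<Rightarrow> nat \<Rightarrow> 'a poly" where
  "reduced_sres_row f g e m' i =
     (if i < e then (monom 1 (e - 1 - i) * f) mod g else monom 1 (m' - 1 - (i - e)) * g)"

definition reduction_coeff :: "'a::field poly \<Rightarrow> 'a poly \<Rightarrow> nat \<Rightarrow> nat \<Rightarrow> nat \<Rightarrow> nat \<Rightarrow> 'a" where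
  "reduction_coeff f g e m' i l = (if l = i then 1 else 0) +
     (if i < e \<and> e \<le> l then coeff (monom 1 (e - 1 - i) * f div g) (m' - 1 - (l - e)) else 0)"

lemma sres_row_eq_lincomb_reduced:
  fixes f g :: "'a::field poly"
  assumes g: "g \<noteq> 0" and dn: "d < degree g" and dm: "d \<le> degree f"
    and e: "e = degree g - d" and m': "m' = degree f - d" and i: "i < e + m'"
  shows "sres_row f g d i =
    (\<Sum>l<e + m'. smult (reduction_coeff f g e m' i l) (reduced_sres_row f g e m' l))"
proof (cases "i < e")
  case False
  then have "(\<Sum>l<e + m'. smult (reduction_coeff f g e m' i l) (reduced_sres_row f g e m' l))
      = (\<Sum>l<e + m'. if l = i then reduced_sres_row f g e m' l else 0)"
    by (intro sum.cong) (auto simp: reduction_coeff_def)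
  also have "\<dots> = sres_row f g d i"
    using i False by (auto simp: reduced_sres_row_def sres_row_def e m')
  finally show ?thesis ..
next
  case True
  let ?p = "monom 1 (e - 1 - i) * f"
  let ?h = "reduced_sres_row f g e m'"
  have deg: "degree ?p < degree g + m'"
    using degree_monom_mult_le[of 1 "e - 1 - i" f] True dn dm e m' by linarith
  have "(\<Sum>l<e + m'. smult (reduction_coeff f g e m' i l) (?h l)) = (\<Sum>l<e + m'. (if l = i then ?h l else 0) +
      (if e \<le> l then smult (coeff (?p div g) (m' - 1 - (l - e))) (?h l) else 0))"
    using True by (intro sum.cong) (auto simp: reduction_coeff_def)
  also have "\<dots> = (\<Sum>l<e + m'. if l = i then ?h l else 0) +
      (\<Sum>l\<in>{e..<e + m'}. smult (coeff (?p div g) (m' - 1 - (l - e))) (?h l))"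
    unfolding sum.distrib by (auto intro!: sum.mono_neutral_cong_right)
  also have "(\<Sum>l\<in>{e..<e + m'}. smult (coeff (?p div g) (m' - 1 - (l - e))) (?h l))
      = (\<Sum>t<m'. smult (coeff (?p div g) t) (monom 1 t * g))"
    by (rule sum.reindex_bij_witness[of _ "\<lambda>t. e + (m' - 1 - t)" "\<lambda>l. m' - 1 - (l - e)"])
      (auto simp: reduced_sres_row_def)
  also have "(\<Sum>l<e + m'. if l = i then ?h l else 0) = ?p mod g"
    using i True by (simp add: reduced_sres_row_def)
  also have "?p mod g + (\<Sum>t<m'. smult (coeff (?p div g) t) (monom 1 t * g)) = ?p"
    by (rule mod_plus_shifted_multiples[OF g deg])
  also have "?p = sres_row f g d i"
    using True by (simp add: sres_row_def e)
  finally show ?thesis ..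
qed

lemma Sres_eq_det_reduced_rows:
  fixes f g :: "'a::field poly"
  assumes g: "g \<noteq> 0" and dn: "d < degree g" and dm: "d \<le> degree f"
    and e: "e = degree g - d" and m': "m' = degree f - d"
  shows "Sres f g d = det (coeff_row_mat (e + m') (e + m') (degree g + m') (reduced_sres_row f g e m'))"
proof -
  let ?C = "mat (e + m') (e + m') (\<lambda>(i, l). [:reduction_coeff f g e m' i l:])"
  have "Sres f g d = det (coeff_row_mat (e + m') (e + m') (degree g + m') (sres_row f g d))"
  proof -
    have "degree f + degree g - 2 * d = e + m'" "degree f + degree g - d = degree g + m'"
      using dn dm e m' by auto
    then show ?thesis by (simp only: Sres_eq_det_coeff_row_mat)
  qed
  also have "coeff_row_mat (e + m') (e + m') (degree g + m') (sres_row f g d) =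
      ?C * coeff_row_mat (e + m') (e + m') (degree g + m') (reduced_sres_row f g e m')"
    using sres_row_eq_lincomb_reduced[OF g dn dm e m'] by (rule coeff_row_mat_lincomb)
  also have "det \<dots> = det ?C * det (coeff_row_mat (e + m') (e + m') (degree g + m') (reduced_sres_row f g e m'))"
    by (rule det_mult) auto
  also have "det ?C = 1"
    by (subst det_upper_triangular_diag[of _ "e + m'"]) (auto simp: upper_triangular_def reduction_coeff_def intro!: prod.neutral)
  finally show ?thesis by simp
qed

lemma det_reduced_sres_rows:
  fixes f g :: "'a::field poly"
  assumes monic: "lead_coeff g = 1" and "0 < e"
  shows "det (coeff_row_mat (e + m') (e + m') (degree g + m') (reduced_sres_row f g e m'))
    = (-1) ^ (e * m') * det (coeff_row_mat e e (degree g) (\<lambda>i. (monom 1 (e - 1 - i) * f) mod g))"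
proof -
  let ?n = "degree g"
  let ?r = "\<lambda>i. (monom 1 (e - 1 - i) * f) mod g"
  let ?M = "coeff_row_mat (e + m') (e + m') (?n + m') (reduced_sres_row f g e m')"
  let ?M' = "mat (e + m') (e + m') (\<lambda>(i, j). ?M $$ (i, if j < e then j + m' else j - e))"
  let ?UL = "coeff_row_mat e e ?n ?r"
  let ?LL = "mat m' e (\<lambda>(i, j). ?M' $$ (i + e, j))"
  let ?LR = "mat m' m' (\<lambda>(i, j). ?M $$ (i + e, j))"
  have "g \<noteq> 0" using monic by auto
  then have coeff_r: "coeff (?r i) k = 0" if "?n \<le> k" for i k
    using degree_mod_less[of g "monom 1 (e - 1 - i) * f"] that
    by (metis coeff_0 coeff_eq_0 order.strict_trans2)
  \<comment> \<open>Moving the last \<open>m'\<close> columns to the front makes the matrix block lower triangular,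
    with a unitriangular block of \<open>g\<close>-rows.\<close>
  have "det ?M = (-1) ^ (e * m') * det ?M'"
    by (rule det_swap_cols) simp
  also have "?M' = four_block_mat ?UL (0\<^sub>m e m') ?LL ?LR"
    by (rule eq_matI)
      (use \<open>0 < e\<close> coeff_r in \<open>auto simp: coeff_row_def reduced_sres_row_def\<close>)
  also have "det (four_block_mat ?UL (0\<^sub>m e m') ?LL ?LR) = det ?UL * det ?LR"
    by (rule det_four_block_mat_upper_right_zero) auto
  also have "det ?LR = 1"
  proof (subst det_upper_triangular_diag[of _ m'])
    have "coeff g k = 0" if "?n < k" for k using that by (simp add: coeff_eq_0)
    then show "upper_triangular ?LR"
      by (auto simp: upper_triangular_def coeff_row_def reduced_sres_row_def coeff_monom_mult)
    show "(\<Prod>i<m'. ?LR $$ (i, i)) = 1"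
      using monic \<open>0 < e\<close>
      by (intro prod.neutral) (auto simp: coeff_row_def reduced_sres_row_def coeff_monom_mult)
  qed auto
  finally show ?thesis by simp
qed

lemma Sres_eq_det_mod_rows:
  fixes f g :: "'a::field poly"
  assumes monic: "lead_coeff g = 1" and dn: "d < degree g" and dm: "d \<le> degree f"
  shows "Sres f g d = smult ((-1) ^ ((degree g - d) * (degree f - d)))
    (det (coeff_row_mat (degree g - d) (degree g - d) (degree g)
      (\<lambda>i. (monom 1 (degree g - d - 1 - i) * f) mod g)))"
proof -
  have "g \<noteq> 0" using monic by auto
  have "(-1 :: 'a poly) ^ k * p = smult ((-1) ^ k) p" for k p
    by (induct k) auto
  then show ?thesis
    using dn Sres_eq_det_reduced_rows[OF \<open>g \<noteq> 0\<close> dn dm refl refl]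
      det_reduced_sres_rows[OF monic, of "degree g - d" "degree f - d" f]
    by simp
qed

section \<open>Expansion over subsets of the roots\<close>

lemma det_powers_mult_det_lagrange_rows:
  fixes B S :: "'a::field set"
  assumes B: "finite B" and S: "S \<subseteq> B" and "0 < e" and s: "bij_betw s {..<e} S"
  shows "smult (Res S (B - S)) (det (mat e e (\<lambda>(i, j). [:s j ^ (e - 1 - i):])) *
      det (coeff_row_mat e e (card B) (\<lambda>j. lagrange_basis B (s j)))) = Res_x (B - S)"
proof -
  let ?n = "card B"
  let ?Q = "Res_x (B - S)"
  let ?V = "mat e e (\<lambda>(i, j). [:s j ^ (e - 1 - i):])"
  let ?D = "mat_diag e (\<lambda>j. [:poly ?Q (s j):])"
  let ?L = "coeff_row_mat e e ?n (\<lambda>j. lagrange_basis B (s j))"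
  have fin: "finite S" using B S finite_subset by auto
  have card: "card S = e" using bij_betw_same_card[OF s] by simp
  have en: "e \<le> ?n" using card card_mono[OF B S] by simp
  have degQ: "degree ?Q = ?n - e"
    using B S fin card by (simp add: degree_Res_x card_Diff_subset)
  have "monom 1 (e - 1 - i) * ?Q = (\<Sum>j<e. smult (s j ^ (e - 1 - i) * poly ?Q (s j)) (lagrange_basis B (s j)))"
    if "i < e" for i
  proof -
    have "degree (monom 1 (e - 1 - i) * ?Q) < ?n"
      using degree_monom_mult_le[of 1 "e - 1 - i" ?Q] degQ en that by linarith
    moreover have "poly (monom 1 (e - 1 - i) * ?Q) b = 0" if "b \<in> B - S" for b
      using that B by (simp add: poly_Res_x_eq_0)
    ultimately have "monom 1 (e - 1 - i) * ?Q =
        (\<Sum>j<e. smult (poly (monom 1 (e - 1 - i) * ?Q) (s j)) (lagrange_basis B (s j)))"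
      by (rule lagrange_interpolation[OF B S s])
    then show ?thesis by (simp add: poly_monom)
  qed
  then have "coeff_row_mat e e ?n (\<lambda>i. monom 1 (e - 1 - i) * ?Q) =
      mat e e (\<lambda>(i, j). [:s j ^ (e - 1 - i) * poly ?Q (s j):]) * ?L"
    by (rule coeff_row_mat_lincomb)
  also have "mat e e (\<lambda>(i, j). [:s j ^ (e - 1 - i) * poly ?Q (s j):]) = ?V * ?D"
    by (subst mat_diag_mult_right[of _ e]) auto
  finally have "?Q = det (?V * ?D * ?L)"
    using det_coeff_row_mat_shifts[OF lead_coeff_Res_x degQ en \<open>0 < e\<close>] by simp
  also have "\<dots> = det ?V * det ?D * det ?L"
    using det_mult[of "?V * ?D" e ?L] det_mult[of ?V e ?D] mult_carrier_mat[of ?V e e ?D e] by simp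
  also have "det ?D = [:Res S (B - S):]"
  proof -
    have "(\<Prod>j<e. poly ?Q (s j)) = (\<Prod>x\<in>S. poly ?Q x)"
      by (rule prod.reindex_bij_betw[OF s])
    then show ?thesis by (simp add: det_mat_diag prod_to_poly poly_Res_x Res_def)
  qed
  finally show ?thesis by (simp add: ac_simps)
qed

lemma det_scaled_powers_mult_det_lagrange_rows:
  fixes B S :: "'a::field set" and f :: "'a poly"
  assumes B: "finite B" and S: "S \<subseteq> B" and "0 < e" and s: "bij_betw s {..<e} S"
  shows "det (mat e e (\<lambda>(i, j). [:s j ^ (e - 1 - i) * poly f (s j):])) *
      det (coeff_row_mat e e (card B) (\<lambda>j. lagrange_basis B (s j)))
    = smult ((\<Prod>x\<in>S. poly f x) / Res S (B - S)) (Res_x (B - S))"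
proof -
  let ?V = "mat e e (\<lambda>(i, j). [:s j ^ (e - 1 - i):])"
  let ?L = "coeff_row_mat e e (card B) (\<lambda>j. lagrange_basis B (s j))"
  have "Res S (B - S) \<noteq> 0"
    using B finite_subset[OF S B] by (auto simp: Res_def prod_zero_iff)
  then have VL: "det ?V * det ?L = smult (inverse (Res S (B - S))) (Res_x (B - S))"
    using det_powers_mult_det_lagrange_rows[OF assms, symmetric] by simp
  have "mat e e (\<lambda>(i, j). [:s j ^ (e - 1 - i) * poly f (s j):]) = ?V * mat_diag e (\<lambda>j. [:poly f (s j):])"
    by (subst mat_diag_mult_right[of _ e]) auto
  then have "det (mat e e (\<lambda>(i, j). [:s j ^ (e - 1 - i) * poly f (s j):])) = det ?V * [:\<Prod>x\<in>S. poly f x:]"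
    by (simp add: det_mult[of _ e] det_mat_diag prod_to_poly prod.reindex_bij_betw[OF s])
  then show ?thesis
    using VL by (simp add: divide_inverse ac_simps)
qed

lemma sum_card_subsets_image:
  assumes h: "bij_betw h {0..<n} B"
  shows "(\<Sum>I\<in>{I. I \<subseteq> {0..<n} \<and> card I = e}. F (h ` I)) = (\<Sum>S\<in>{S. S \<subseteq> B \<and> card S = e}. F S)"
proof -
  have card: "card (h ` I) = card I" if "I \<subseteq> {0..<n}" for I
    using h that by (meson bij_betw_imp_inj_on bij_betw_subset card_image)
  have "inj_on (image h) {I. I \<subseteq> {0..<n} \<and> card I = e}"
    using inj_on_image_Pow[OF bij_betw_imp_inj_on[OF h]] by (rule inj_on_subset) auto
  moreover have "image h ` {I. I \<subseteq> {0..<n} \<and> card I = e} = {S. S \<subseteq> B \<and> card S = e}"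
    using card bij_betw_imp_surj_on[OF h] by (auto elim!: subset_imageE)
  ultimately show ?thesis
    by (metis (no_types, lifting) sum.reindex_cong)
qed

lemma det_mod_rows_eq_sum_subsets:
  fixes f :: "'a::field poly" and B :: "'a set"
  assumes B: "finite B" and "0 < e" "e \<le> card B"
  shows "det (coeff_row_mat e e (card B) (\<lambda>i. (monom 1 (e - 1 - i) * f) mod Res_x B)) =
    (\<Sum>S\<in>{S. S \<subseteq> B \<and> card S = e}. smult ((\<Prod>x\<in>S. poly f x) / Res S (B - S)) (Res_x (B - S)))"
proof -
  let ?n = "card B"
  let ?T = "\<lambda>S. smult ((\<Prod>x\<in>S. poly f x) / Res S (B - S)) (Res_x (B - S))"
  obtain bs where bs: "bij_betw bs {0..<?n} B"
    using ex_bij_betw_nat_finite[OF B] by blast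
  let ?A = "mat e ?n (\<lambda>(i, l). [:bs l ^ (e - 1 - i) * poly f (bs l):])"
  let ?L = "coeff_row_mat ?n e ?n (\<lambda>l. lagrange_basis B (bs l))"
  have "(monom 1 (e - 1 - i) * f) mod Res_x B =
      (\<Sum>l<?n. smult (bs l ^ (e - 1 - i) * poly f (bs l)) (lagrange_basis B (bs l)))" for i
  proof -
    have "B \<noteq> {}" using \<open>0 < e\<close> \<open>e \<le> ?n\<close> by auto
    then show ?thesis using mod_Res_x_eq_interpolation[OF B _ bs] by (simp add: poly_monom)
  qed
  then have "coeff_row_mat e e ?n (\<lambda>i. (monom 1 (e - 1 - i) * f) mod Res_x B) = ?A * ?L"
    by (intro coeff_row_mat_lincomb)
  then have "det (coeff_row_mat e e ?n (\<lambda>i. (monom 1 (e - 1 - i) * f) mod Res_x B)) =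
      (\<Sum>I\<in>{I. I \<subseteq> {0..<?n} \<and> card I = e}.
        det (mat e e (\<lambda>(i, j). ?A $$ (i, subset_enum I j))) *
        det (mat e e (\<lambda>(i, j). ?L $$ (subset_enum I i, j))))"
    by (simp add: cauchy_binet[of _ e ?n])
  also have "\<dots> = (\<Sum>I\<in>{I. I \<subseteq> {0..<?n} \<and> card I = e}. ?T (bs ` I))"
  proof (rule sum.cong[OF refl])
    fix I assume "I \<in> {I. I \<subseteq> {0..<?n} \<and> card I = e}"
    then have I: "I \<subseteq> {0..<?n}" "card I = e" by auto
    have enum: "bij_betw (subset_enum I) {..<e} I"
      using bij_betw_subset_enum[of I] I finite_subset by (auto simp: atLeast0LessThan)
    then have lt: "subset_enum I j < ?n" if "j < e" for j
      using bij_betw_apply[OF enum] I that by fastforce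
    have s: "bij_betw (bs \<circ> subset_enum I) {..<e} (bs ` I)"
      by (rule bij_betw_trans[OF enum bij_betw_subset[OF bs I(1) refl]])
    have minors: "mat e e (\<lambda>(i, j). ?A $$ (i, subset_enum I j)) =
        mat e e (\<lambda>(i, j). [:(bs \<circ> subset_enum I) j ^ (e - 1 - i) * poly f ((bs \<circ> subset_enum I) j):])"
      "mat e e (\<lambda>(i, j). ?L $$ (subset_enum I i, j)) =
        coeff_row_mat e e ?n (\<lambda>j. lagrange_basis B ((bs \<circ> subset_enum I) j))"
      by (auto intro!: eq_matI simp: lt)
    have "bs ` I \<subseteq> B"
      using image_mono[OF I(1), of bs] bij_betw_imp_surj_on[OF bs] by (simp only:)
    then show "det (mat e e (\<lambda>(i, j). ?A $$ (i, subset_enum I j))) *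
        det (mat e e (\<lambda>(i, j). ?L $$ (subset_enum I i, j))) = ?T (bs ` I)"
      unfolding minors by (rule det_scaled_powers_mult_det_lagrange_rows[OF B _ \<open>0 < e\<close> s])
  qed
  also have "\<dots> = (\<Sum>S\<in>{S. S \<subseteq> B \<and> card S = e}. ?T S)"
    by (rule sum_card_subsets_image[OF bs])
  finally show ?thesis .
qed

section \<open>The Sylvester sum\<close>

lemma Syl_0_left:
  assumes "finite A"
  shows "Syl 0 d A B = (\<Sum>B'\<in>{B'. B' \<subseteq> B \<and> card B' = d}.
     smult (Res A (B - B') / Res B' (B - B')) (Res_x B'))"
proof -
  have "{A'. A' \<subseteq> A \<and> card A' = 0} = {{}}"
    using assms finite_subset by (fastforce simp: card_eq_0_iff)
  then show ?thesis by (simp add: Syl_def Res_def Res_x_def)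
qed

lemma Syl_0_eq_sum_complements:
  fixes A B :: "'a::field set"
  assumes A: "finite A" and B: "finite B" and "d \<le> card A" "d \<le> card B"
  shows "Syl 0 d A B = smult ((-1) ^ ((card B - d) * (card A - d)))
    (\<Sum>S\<in>{S. S \<subseteq> B \<and> card S = card B - d}. smult (Res S A / Res S (B - S)) (Res_x (B - S)))"
proof -
  have "Syl 0 d A B = (\<Sum>S\<in>{S. S \<subseteq> B \<and> card S = card B - d}.
      smult (Res A S / Res (B - S) S) (Res_x (B - S)))"
  proof -
    have "B - (B - S) = S" "card (B - S) = card B - card S" if "S \<subseteq> B" for S
      using that finite_subset[OF that B] by (auto simp: card_Diff_subset)
    then show ?thesis
      unfolding Syl_0_left[OF A] using \<open>d \<le> card B\<close>
      by (intro sum.reindex_bij_witness[of _ "\<lambda>S. B - S" "\<lambda>B'. B - B'"]) auto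
  qed
  also have "\<dots> = (\<Sum>S\<in>{S. S \<subseteq> B \<and> card S = card B - d}.
      smult ((-1) ^ ((card B - d) * (card A - d))) (smult (Res S A / Res S (B - S)) (Res_x (B - S))))"
  proof (rule sum.cong[OF refl])
    fix S assume "S \<in> {S. S \<subseteq> B \<and> card S = card B - d}"
    then have S: "card S = card B - d" "card (B - S) = d"
      using \<open>d \<le> card B\<close> by (auto simp: card_Diff_subset finite_subset[OF _ B])
    have "card A = (card A - d) + d" using \<open>d \<le> card A\<close> by simp
    then have "card A * card S = card S * (card A - d) + d * card S"
      by (metis add_mult_distrib mult.commute)
    then have "Res A S = (-1) ^ (card S * (card A - d)) * ((-1) ^ (d * card S) * Res S A)"
      using Res_swap[of A S] by (simp only: power_add mult.assoc)
    moreover have "Res (B - S) S = (-1) ^ (d * card S) * Res S (B - S)"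
      using Res_swap[of "B - S" S] by (simp only: S(2))
    ultimately have "Res A S / Res (B - S) S =
        (-1) ^ ((card B - d) * (card A - d)) * (Res S A / Res S (B - S))"
      by (simp add: S(1))
    then show "smult (Res A S / Res (B - S) S) (Res_x (B - S)) =
        smult ((-1) ^ ((card B - d) * (card A - d))) (smult (Res S A / Res S (B - S)) (Res_x (B - S)))"
      by simp
  qed
  finally show ?thesis by (simp only: smult_sum_right)
qed

theorem proposition2p9:
  fixes A B :: "'a::field set" and d :: nat
  assumes "finite A" and "finite B"
    and "d < card B" and "d \<le> card A"
  shows "Syl 0 d A B = Sres (\<Prod>a\<in>A. [:- a, 1:]) (\<Prod>b\<in>B. [:- b, 1:]) d"
proof -
  have deg: "degree (Res_x A) = card A" "degree (Res_x B) = card B"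
    using assms by (simp_all add: degree_Res_x)
  have "Sres (Res_x A) (Res_x B) d = smult ((-1) ^ ((card B - d) * (card A - d)))
      (det (coeff_row_mat (card B - d) (card B - d) (card B)
        (\<lambda>i. (monom 1 (card B - d - 1 - i) * Res_x A) mod Res_x B)))"
    using Sres_eq_det_mod_rows[OF lead_coeff_Res_x[of B], where f = "Res_x A" and d = d]
      assms deg by simp
  also have "det (coeff_row_mat (card B - d) (card B - d) (card B)
        (\<lambda>i. (monom 1 (card B - d - 1 - i) * Res_x A) mod Res_x B)) =
      (\<Sum>S\<in>{S. S \<subseteq> B \<and> card S = card B - d}. smult (Res S A / Res S (B - S)) (Res_x (B - S)))"
    using det_mod_rows_eq_sum_subsets[of B "card B - d" "Res_x A"] assms
    by (simp add: poly_Res_x Res_def)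
  also have "smult ((-1) ^ ((card B - d) * (card A - d))) \<dots> = Syl 0 d A B"
    by (rule Syl_0_eq_sum_complements[symmetric]) (use assms in auto)
  finally show ?thesis by (simp add: Res_x_def)
qed

end
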